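(* Let $(\Delta,R)$ be a gentle quiver. Then \[ \sum_{\mathcal O\in\mathcal N/\mathbb Z\,\cup\,\mathcal C/\mathbb Z} p(\mathcal O) = 2|\Delta_0|-|\Delta_1| \qquad\text{and}\qquad \sum_{\mathcal O\in\mathcal N/\mathbb Z\,\cup\,\mathcal C/\mathbb Z} q(\mathcal O) = |\Delta_1|. \]
   Context: A quiver $\Delta$ has finite vertex set $\Delta_0$, arrow set $\Delta_1$, maps $s,t$. A path of length $n\ge1$ is $(\alpha_1,\dots,\alpha_n)$ with $s\alpha_i=t\alpha_{i+1}$. A gentle quiver is $(\Delta,R)$ with $\Delta$ connected, $R$ a set of paths of length 2, such that: (1) each vertex is start of at most two arrows and end of at most two arrows; (2) for each arrow $\alpha$ at most one $\beta$ with $s\beta=t\alpha$, $(\beta,\alpha)\notin R$ and at most one $\gamma$ with $t\gamma=s\alpha$, $(\alpha,\gamma)\notin R$; (3) for each $\alpha$ at most one $\beta$ with $(\beta,\alpha)\in R$ and at most one $\gamma$ with $(\alpha,\gamma)\in R$; (4) for some $n$ every path of length $n$ has a subpath in $R$. Fix $\sigma,\tau:\Delta_1\to\{\pm1\}$ with distinct arrows of same start having opposite $\sigma$, distinct arrows of same end opposite $\tau$, and for $s\alpha=t\beta$: $(\alpha,\beta)\in R$ iff $\sigma\alpha=\tau\beta$; $\sigma\omega=\sigma\alpha_n,\tau\omega=\tau\alpha_1$. Permitted paths: paths with no consecutive pair in $R$, plus trivial $1_{x,\varepsilon}$ ($s=t=x$, $\sigma=\varepsilon,\tau=-\varepsilon$);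 maximal if no arrow $\alpha$ with $s\alpha=t\omega,\sigma\alpha=-\tau\omega$ and no $\beta$ with $t\beta=s\omega,\tau\beta=-\sigma\omega$; set $\mathcal M$. Antipaths: all consecutive pairs in $R$, plus trivial $1'_{x,\varepsilon}$ ($s=t=x$, $\sigma=\tau=\varepsilon$); maximal if no $\alpha$ with $s\alpha=t\omega,\sigma\alpha=\tau\omega$ and no $\beta$ with $t\beta=s\omega,\tau\beta=\sigma\omega$; set $\mathcal N$. $\phi:\mathcal M\to\mathcal N$, $\omega\mapsto$ unique $\omega'$ with $t\omega'=t\omega,\tau\omega'=-\tau\omega$; $\psi:\mathcal N\to\mathcal M$, $\omega\mapsto$ unique $\omega'$ with $s\omega'=s\omega,\sigma\omega'=-\sigma\omega$; $\Phi=\phi\psi$ acts on $\mathcal N$ and $\mathcal N/\mathbb Z$ is its set of orbits; for $\mathcal O\in\mathcal N/\mathbb Z$, $p(\mathcal O)=|\mathcal O|$ and $q(\mathcal O)=\sum_{\omega\in\mathcal O}\ell(\omega)$. $\mathcal C$: arrows $\alpha$ with $(\alpha)$ not a subpath of a maximal antipath; $\Psi:\mathcal C\to\mathcal C$, $\alpha\mapsto$ unique $\beta\in\mathcal C$ with $t\beta=s\alpha,\tau\beta=\sigma\alpha$; $\mathcal C/\mathbb Z$ its orbits, with $p(\mathcal O)=0$, $q(\mathcal O)=|\mathcal O|$. *)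

theory Defs
  imports Main
begin

definition is_path :: "'a set \<Rightarrow> ('a \<Rightarrow> 'v) \<Rightarrow> ('a \<Rightarrow> 'v) \<Rightarrow> 'a list \<Rightarrow> bool" where
  "is_path A s t l \<longleftrightarrow> l \<noteq> [] \<and> set l \<subseteq> A \<and>
     (\<forall>i. Suc i < length l \<longrightarrow> s (l ! i) = t (l ! Suc i))"

definition quiver_connected :: "'v set \<Rightarrow> 'a set \<Rightarrow> ('a \<Rightarrow> 'v) \<Rightarrow> ('a \<Rightarrow> 'v) \<Rightarrow> bool" where
  "quiver_connected V A s t \<longleftrightarrow>
     (let E = {(s a, t a) | a. a \<in> A} in \<forall>x\<in>V. \<forall>y\<in>V. (x, y) \<in> (E \<union> E\<inverse>)\<^sup>*)"

definition gentle :: "'v set \<Rightarrow> 'a set \<Rightarrow> ('a \<Rightarrow> 'v) \<Rightarrow> ('a \<Rightarrow> 'v) \<Rightarrow> ('a \<times> 'a) set \<Rightarrow> bool" where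
  "gentle V A s t R \<longleftrightarrow>
     finite V \<and> finite A \<and> (\<forall>a\<in>A. s a \<in> V \<and> t a \<in> V) \<and>
     quiver_connected V A s t \<and>
     R \<subseteq> {(a, b). a \<in> A \<and> b \<in> A \<and> s a = t b} \<and>
     (\<forall>x\<in>V. card {a\<in>A. s a = x} \<le> 2 \<and> card {a\<in>A. t a = x} \<le> 2) \<and>
     (\<forall>a\<in>A. card {b\<in>A. s b = t a \<and> (b, a) \<notin> R} \<le> 1 \<and>
             card {c\<in>A. t c = s a \<and> (a, c) \<notin> R} \<le> 1) \<and>
     (\<forall>a\<in>A. card {b\<in>A. (b, a) \<in> R} \<le> 1 \<and> card {c\<in>A. (a, c) \<in> R} \<le> 1) \<and>
     (\<exists>n\<ge>1. \<forall>l. is_path A s t l \<and> length l = n \<longrightarrow>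
             (\<exists>i. Suc i < n \<and> (l ! i, l ! Suc i) \<in> R))"

definition sign_fns :: "'a set \<Rightarrow> ('a \<Rightarrow> 'v) \<Rightarrow> ('a \<Rightarrow> 'v) \<Rightarrow> ('a \<times> 'a) set
    \<Rightarrow> ('a \<Rightarrow> int) \<Rightarrow> ('a \<Rightarrow> int) \<Rightarrow> bool" where
  "sign_fns A s t R \<sigma> \<tau> \<longleftrightarrow>
     (\<forall>a\<in>A. \<sigma> a \<in> {1, -1} \<and> \<tau> a \<in> {1, -1}) \<and>
     (\<forall>a\<in>A. \<forall>b\<in>A. a \<noteq> b \<and> s a = s b \<longrightarrow> \<sigma> a = - \<sigma> b) \<and>
     (\<forall>a\<in>A. \<forall>b\<in>A. a \<noteq> b \<and> t a = t b \<longrightarrow> \<tau> a = - \<tau> b) \<and>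
     (\<forall>a\<in>A. \<forall>b\<in>A. s a = t b \<longrightarrow> ((a, b) \<in> R \<longleftrightarrow> \<sigma> a = \<tau> b))"

text \<open>TrivP x e is the trivial permitted path 1_{x,e}; TrivA x e is the trivial antipath
  1'_{x,e}; Path l is the nontrivial path l = [a_1,...,a_n].\<close>

datatype ('v, 'a) qpath = TrivP 'v int | TrivA 'v int | Path "'a list"

fun psrc :: "('a \<Rightarrow> 'v) \<Rightarrow> ('v, 'a) qpath \<Rightarrow> 'v" where
  "psrc s (TrivP x e) = x"
| "psrc s (TrivA x e) = x"
| "psrc s (Path l) = s (last l)"

fun ptgt :: "('a \<Rightarrow> 'v) \<Rightarrow> ('v, 'a) qpath \<Rightarrow> 'v" where
  "ptgt t (TrivP x e) = x"
| "ptgt t (TrivA x e) = x"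
| "ptgt t (Path l) = t (hd l)"

fun psig :: "('a \<Rightarrow> int) \<Rightarrow> ('v, 'a) qpath \<Rightarrow> int" where
  "psig \<sigma> (TrivP x e) = e"
| "psig \<sigma> (TrivA x e) = e"
| "psig \<sigma> (Path l) = \<sigma> (last l)"

fun ptau :: "('a \<Rightarrow> int) \<Rightarrow> ('v, 'a) qpath \<Rightarrow> int" where
  "ptau \<tau> (TrivP x e) = - e"
| "ptau \<tau> (TrivA x e) = e"
| "ptau \<tau> (Path l) = \<tau> (hd l)"

fun plen :: "('v, 'a) qpath \<Rightarrow> nat" where
  "plen (TrivP x e) = 0"
| "plen (TrivA x e) = 0"
| "plen (Path l) = length l"

definition permitted :: "'v set \<Rightarrow> 'a set \<Rightarrow> ('a \<Rightarrow> 'v) \<Rightarrow> ('a \<Rightarrow> 'v) \<Rightarrow> ('a \<times> 'a) set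
    \<Rightarrow> ('v, 'a) qpath set" where
  "permitted V A s t R =
     {TrivP x e | x e. x \<in> V \<and> e \<in> {1, -1}} \<union>
     {Path l | l. is_path A s t l \<and> (\<forall>i. Suc i < length l \<longrightarrow> (l ! i, l ! Suc i) \<notin> R)}"

definition antipaths :: "'v set \<Rightarrow> 'a set \<Rightarrow> ('a \<Rightarrow> 'v) \<Rightarrow> ('a \<Rightarrow> 'v) \<Rightarrow> ('a \<times> 'a) set
    \<Rightarrow> ('v, 'a) qpath set" where
  "antipaths V A s t R =
     {TrivA x e | x e. x \<in> V \<and> e \<in> {1, -1}} \<union>
     {Path l | l. is_path A s t l \<and> (\<forall>i. Suc i < length l \<longrightarrow> (l ! i, l ! Suc i) \<in> R)}"

definition maxPerm where
  "maxPerm V A s t R \<sigma> \<tau> =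
     {w \<in> permitted V A s t R.
        \<not> (\<exists>a\<in>A. s a = ptgt t w \<and> \<sigma> a = - ptau \<tau> w) \<and>
        \<not> (\<exists>b\<in>A. t b = psrc s w \<and> \<tau> b = - psig \<sigma> w)}"

definition maxAnti where
  "maxAnti V A s t R \<sigma> \<tau> =
     {w \<in> antipaths V A s t R.
        \<not> (\<exists>a\<in>A. s a = ptgt t w \<and> \<sigma> a = ptau \<tau> w) \<and>
        \<not> (\<exists>b\<in>A. t b = psrc s w \<and> \<tau> b = psig \<sigma> w)}"

definition phiM where
  "phiM V A s t R \<sigma> \<tau> w =
     (THE w'. w' \<in> maxAnti V A s t R \<sigma> \<tau> \<and> ptgt t w' = ptgt t w \<and> ptau \<tau> w' = - ptau \<tau> w)"

definition psiN where
  "psiN V A s t R \<sigma> \<tau> w =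
     (THE w'. w' \<in> maxPerm V A s t R \<sigma> \<tau> \<and> psrc s w' = psrc s w \<and> psig \<sigma> w' = - psig \<sigma> w)"

definition PhiN where
  "PhiN V A s t R \<sigma> \<tau> = phiM V A s t R \<sigma> \<tau> \<circ> psiN V A s t R \<sigma> \<tau>"

definition orbits :: "('b \<Rightarrow> 'b) \<Rightarrow> 'b set \<Rightarrow> 'b set set" where
  "orbits f X = {{(f ^^ n) x | n. True} | x. x \<in> X}"

definition is_subpath :: "'a list \<Rightarrow> 'a list \<Rightarrow> bool" where
  "is_subpath p w \<longleftrightarrow> (\<exists>u v. w = u @ p @ v)"

definition arrowsC where
  "arrowsC V A s t R \<sigma> \<tau> =
     {a \<in> A. \<not> (\<exists>l. Path l \<in> maxAnti V A s t R \<sigma> \<tau> \<and> is_subpath [a] l)}"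

definition PsiC where
  "PsiC V A s t R \<sigma> \<tau> a =
     (THE b. b \<in> arrowsC V A s t R \<sigma> \<tau> \<and> t b = s a \<and> \<tau> b = \<sigma> a)"

text \<open>p and q on orbits: for O in N/Z, p O = |O|, q O = sum of lengths; for O in C/Z,
  p O = 0, q O = |O|.\<close>

end

theory Submission
  imports Defs
begin

text \<open>A maximal antipath is determined by its source \<open>x\<close> together with the sign \<open>e\<close> of
  \<open>\<sigma>\<close> there, and the pairs \<open>(x, e)\<close> that occur are exactly those for which no arrow \<open>b\<close>
  ends in \<open>x\<close> with \<open>\<tau> b = e\<close>; the remaining pairs are the \<open>(t b, \<tau> b)\<close> of the arrows.
  Hence the \<open>2|\<Delta>\<^sub>0|\<close> signed vertices split into \<open>|\<N>| + |\<Delta>\<^sub>1|\<close>.  Because consecutive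
  arrows of an antipath determine each other, every arrow outside \<open>\<C>\<close> sits at exactly one
  position of exactly one maximal antipath, so the total length of \<open>\<N>\<close> is
  \<open>|\<Delta>\<^sub>1| - |\<C>|\<close>.  Finally \<open>\<Phi>\<close> and \<open>\<Psi>\<close> permute \<open>\<N>\<close> and \<open>\<C>\<close>, so summing
  \<open>p\<close> and \<open>q\<close> over their orbits is summing over \<open>\<N>\<close> and \<open>\<C>\<close>.\<close>

lemma funpow_returns:
  assumes "finite X" "f ` X \<subseteq> X" "inj_on f X" "x \<in> X"
  obtains k where "k > 0" "(f ^^ k) x = x"
proof -
  have bij: "bij_betw (f ^^ n) X X" for n
    by (rule bij_betw_funpow) (simp add: bij_betw_def endo_inj_surj assms)
  have "\<not> inj_on (\<lambda>n. (f ^^ n) x) {0..card X}"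
  proof
    assume "inj_on (\<lambda>n. (f ^^ n) x) {0..card X}"
    moreover have "(\<lambda>n. (f ^^ n) x) ` {0..card X} \<subseteq> X"
      using bij assms(4) by (auto simp: bij_betw_def)
    ultimately show False
      using card_inj_on_le[OF _ _ assms(1)] by fastforce
  qed
  then obtain i j where "i < j" and ij: "(f ^^ i) x = (f ^^ i) ((f ^^ (j - i)) x)"
    unfolding inj_on_def
    by (metis (no_types, lifting) add_diff_inverse_nat comp_apply funpow_add
        not_less_iff_gr_or_eq)
  moreover have "(f ^^ (j - i)) x \<in> X"
    using bij assms(4) by (auto simp: bij_betw_def)
  ultimately have "(f ^^ (j - i)) x = x"
    using bij[of i] assms(4) by (auto simp: bij_betw_def inj_on_def)
  with \<open>i < j\<close> show ?thesis using that[of "j - i"] by simp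
qed

lemma sum_orbits:
  assumes "finite X" "f ` X \<subseteq> X" "inj_on f X"
  shows "(\<Sum>Ob\<in>orbits f X. sum h Ob) = sum h X"
proof -
  define orbit where "orbit x = {(f ^^ n) x | n. True}" for x
  have orbits_eq: "orbits f X = orbit ` X"
    unfolding orbits_def orbit_def by auto
  have orbit_subset: "orbit x \<subseteq> X" if "x \<in> X" for x
  proof -
    have "(f ^^ n) x \<in> X" for n
      using that by (induction n) (use assms(2) in auto)
    then show ?thesis unfolding orbit_def by auto
  qed
  have orbit_self: "x \<in> orbit x" for x
    unfolding orbit_def by (metis (mono_tags) funpow_0 mem_Collect_eq)
  have orbit_funpow: "orbit ((f ^^ n) x) \<subseteq> orbit x" for n x
  proof
    fix z assume "z \<in> orbit ((f ^^ n) x)"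
    then obtain m where "z = (f ^^ m) ((f ^^ n) x)" unfolding orbit_def by blast
    then have "z = (f ^^ (m + n)) x" by (simp add: funpow_add)
    then show "z \<in> orbit x" unfolding orbit_def by blast
  qed
  have orbit_eq: "orbit y = orbit x" if x: "x \<in> X" and y_orbit: "y \<in> orbit x" for x y
  proof
    obtain n where y: "y = (f ^^ n) x" using y_orbit unfolding orbit_def by auto
    show "orbit y \<subseteq> orbit x"
      using orbit_funpow by (simp add: y)
    obtain k where "k > 0" "(f ^^ k) x = x" using funpow_returns[OF assms x] .
    then have "(f ^^ (k * n)) x = x"
      using funpow_mod_eq[where f = f and n = k and m = "k * n" and x = x] by simp
    moreover have "(f ^^ (k * n - n + n)) x = (f ^^ (k * n - n)) y"
      by (simp only: funpow_add comp_apply y)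
    moreover have "k * n - n + n = k * n"
      using \<open>k > 0\<close> by simp
    ultimately have "x = (f ^^ (k * n - n)) y"
      by simp
    then show "orbit x \<subseteq> orbit y"
      using orbit_funpow[of "k * n - n" y] by simp
  qed
  have finite_orbits: "\<forall>Ob\<in>orbit ` X. finite Ob"
    using orbit_subset finite_subset[OF _ assms(1)] by blast
  have disjoint_orbits: "\<forall>Ob\<in>orbit ` X. \<forall>Ob'\<in>orbit ` X. Ob \<noteq> Ob' \<longrightarrow> Ob \<inter> Ob' = {}"
    using orbit_eq by blast
  have "\<Union>(orbit ` X) = X"
    using orbit_subset orbit_self by blast
  then show ?thesis
    using sum.Union_disjoint[OF finite_orbits disjoint_orbits, of h] orbits_eq by simp
qed

lemma bij_betw_THE:
  assumes f: "bij_betw f X Z" and g: "bij_betw g Y Z"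
  shows "bij_betw (\<lambda>x. THE y. y \<in> Y \<and> g y = f x) X Y"
proof -
  have "(THE y. y \<in> Y \<and> g y = f x) = inv_into Y g (f x)" if "x \<in> X" for x
  proof (rule the_equality)
    have "f x \<in> Z" using f that by (auto simp: bij_betw_def)
    then show "inv_into Y g (f x) \<in> Y \<and> g (inv_into Y g (f x)) = f x"
      using g by (auto simp: bij_betw_def inv_into_into f_inv_into_f)
  next
    show "y = inv_into Y g (f x)" if "y \<in> Y \<and> g y = f x" for y
      using that g by (metis bij_betw_imp_inj_on inv_into_f_f)
  qed
  moreover have "bij_betw (inv_into Y g \<circ> f) X Y"
    using bij_betw_trans[OF f bij_betw_inv_into[OF g]] .
  ultimately show ?thesis
    by (auto cong: bij_betw_cong)
qed

lemma bij_betw_flip_sign: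
  fixes c :: int
  shows "bij_betw (\<lambda>(x, e). (x, - e)) {(x, e). x \<in> V \<and> e \<in> {1, -1} \<and> P x (c * e)}
     {(x, e). x \<in> V \<and> e \<in> {1, -1} \<and> P x (- c * e)}"
  by (rule bij_betw_byWitness[where f' = "\<lambda>(x, e). (x, - e)"]) auto

definition maximal_chain :: "('a \<Rightarrow> 'a \<Rightarrow> bool) \<Rightarrow> 'a list \<Rightarrow> bool" where
  "maximal_chain P l \<longleftrightarrow> l \<noteq> [] \<and> successively P l \<and> (\<nexists>a. P a (hd l)) \<and> (\<nexists>b. P (last l) b)"

lemma maximal_chain_rev: "maximal_chain P (rev l) \<longleftrightarrow> maximal_chain (\<lambda>x y. P y x) l"
  unfolding maximal_chain_def by (auto simp: hd_rev last_rev)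

lemma predecessor_notin_chain:
  assumes right_unique: "\<And>a b b'. P a b \<Longrightarrow> P a b' \<Longrightarrow> b = b'"
    and l: "l \<noteq> []" "distinct l" "successively P l" "\<nexists>b. P (last l) b"
    and a: "P a (hd l)"
  shows "a \<notin> set l"
proof
  assume "a \<in> set l"
  then obtain k where k: "k < length l" "l ! k = a" by (auto simp: in_set_conv_nth)
  show False
  proof (cases "Suc k < length l")
    case True
    then have "P a (l ! Suc k)" using successively_nth[OF l(3)] k(2) by blast
    then have "l ! Suc k = l ! 0" using right_unique a hd_conv_nth[OF l(1)] by metis
    then show False using l(2) True nth_eq_iff_index_eq by fastforce
  next
    case False
    then have "k = length l - 1" using k(1) by simp
    then have "a = last l" using k(2) l(1) by (simp add: last_conv_nth)
    then show False using a l(4) by blast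
  qed
qed

lemma maximal_chain_ending_at:
  assumes "finite A" and right_unique: "\<And>a b b'. P a b \<Longrightarrow> P a b' \<Longrightarrow> b = b'"
    and P_dom: "\<And>a b. P a b \<Longrightarrow> a \<in> A" and "x \<in> A" "\<nexists>b. P x b"
  obtains l where "set l \<subseteq> A" "maximal_chain P l" "last l = x"
proof -
  have "\<exists>l'. set l' \<subseteq> A \<and> maximal_chain P l' \<and> last l' = last l"
    if "l \<noteq> []" "distinct l" "set l \<subseteq> A" "successively P l" "\<nexists>b. P (last l) b" for l
    using that
  proof (induction "card A - length l" arbitrary: l rule: less_induct)
    case less
    show ?case
    proof (cases "\<exists>a. P a (hd l)")
      case False
      then show ?thesis using less.prems unfolding maximal_chain_def by blast
    next
      case True
      then obtain a where a: "P a (hd l)" ..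
      have "distinct (a # l)"
        using predecessor_notin_chain[OF right_unique] less.prems a by simp
      moreover have "set (a # l) \<subseteq> A"
        using P_dom a less.prems(3) by auto
      ultimately have "length (a # l) \<le> card A"
        using distinct_card card_mono[OF \<open>finite A\<close>] by metis
      then have "card A - length (a # l) < card A - length l"
        by simp
      moreover have "successively P (a # l)"
        using a less.prems(1,4) by (simp add: successively_Cons)
      ultimately have "\<exists>l'. set l' \<subseteq> A \<and> maximal_chain P l' \<and> last l' = last (a # l)"
        using less.prems(1,5) \<open>distinct (a # l)\<close> \<open>set (a # l) \<subseteq> A\<close> by (intro less.hyps) simp_all
      then show ?thesis
        using less.prems(1) by simp
    qed
  qed
  from this[of "[x]"] show ?thesis using assms that by auto
qed

lemma maximal_chain_starting_at:
  assumes "finite A" and left_unique: "\<And>a a' b. P a b \<Longrightarrow> P a' b \<Longrightarrow> a = a'"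
    and P_ran: "\<And>a b. P a b \<Longrightarrow> b \<in> A" and "x \<in> A" "\<nexists>a. P a x"
  obtains l where "set l \<subseteq> A" "maximal_chain P l" "hd l = x"
proof -
  obtain l where "set l \<subseteq> A" "maximal_chain (\<lambda>x y. P y x) l" "last l = x"
    by (rule maximal_chain_ending_at[of A "\<lambda>x y. P y x"]) (use assms in blast)+
  moreover from this(2) have "l \<noteq> []" unfolding maximal_chain_def by simp
  ultimately show ?thesis
    using that[of "rev l"] maximal_chain_rev[of P l] by (simp add: hd_rev)
qed

lemma chain_eq_by_last:
  assumes left_unique: "\<And>a a' b. P a b \<Longrightarrow> P a' b \<Longrightarrow> a = a'"
  shows "l1 \<noteq> [] \<Longrightarrow> l2 \<noteq> [] \<Longrightarrow> successively P l1 \<Longrightarrow> successively P l2 \<Longrightarrow>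
    \<nexists>a. P a (hd l1) \<Longrightarrow> \<nexists>a. P a (hd l2) \<Longrightarrow> last l1 = last l2 \<Longrightarrow> l1 = l2"
proof (induction l1 arbitrary: l2 rule: rev_induct)
  case Nil
  then show ?case by simp
next
  case (snoc x xs)
  define ys where "ys = butlast l2"
  have l2: "l2 = ys @ [x]"
    using snoc.prems(2,7) unfolding ys_def by simp
  have last_pred: "P (last zs) x" if "zs \<noteq> []" "successively P (zs @ [x])" for zs
    using that by (simp add: successively_append_iff)
  show ?case
  proof (cases "xs = []")
    case True
    then have "\<nexists>a. P a x"
      using snoc.prems(5) by simp
    then have "ys = []"
      using last_pred[of ys] snoc.prems(4) l2 by blast
    then show ?thesis using True l2 by simp
  next
    case False
    then have "P (last xs) x"
      using last_pred snoc.prems(3) by blast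
    then have "ys \<noteq> []"
      using snoc.prems(6) l2 by auto
    then have "P (last ys) x"
      using last_pred snoc.prems(4) l2 by blast
    with \<open>P (last xs) x\<close> have "last xs = last ys"
      using left_unique by blast
    moreover have "successively P xs" "successively P ys"
      using snoc.prems(3,4) l2 by (simp_all add: successively_append_iff)
    moreover have "\<nexists>a. P a (hd xs)" "\<nexists>a. P a (hd ys)"
      using snoc.prems(5,6) False \<open>ys \<noteq> []\<close> l2 by simp_all
    ultimately have "xs = ys"
      using snoc.IH False \<open>ys \<noteq> []\<close> by blast
    then show ?thesis using l2 by simp
  qed
qed

lemma chain_eq_by_hd:
  assumes "\<And>a b b'. P a b \<Longrightarrow> P a b' \<Longrightarrow> b = b'"
    and "l1 \<noteq> []" "l2 \<noteq> []" "successively P l1" "successively P l2"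
    "\<nexists>b. P (last l1) b" "\<nexists>b. P (last l2) b" "hd l1 = hd l2"
  shows "l1 = l2"
proof -
  have "rev l1 = rev l2"
    by (rule chain_eq_by_last[where P = "\<lambda>x y. P y x"]) (use assms in \<open>auto simp: last_rev hd_rev\<close>)
  then show ?thesis by simp
qed

lemma maximal_chain_nth_eq:
  assumes left_unique: "\<And>a a' b. P a b \<Longrightarrow> P a' b \<Longrightarrow> a = a'"
    and right_unique: "\<And>a b b'. P a b \<Longrightarrow> P a b' \<Longrightarrow> b = b'"
    and l1: "maximal_chain P l1" and l2: "maximal_chain P l2"
    and i: "i < length l1" and j: "j < length l2" and nth_eq: "l1 ! i = l2 ! j"
  shows "i = j \<and> l1 = l2"
proof -
  have take_drop: "successively P (take n l) \<and> successively P (drop n l)" if "successively P l" for l n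
    using that by (metis append_take_drop_id successively_append_iff)
  note l1' = l1[unfolded maximal_chain_def] and l2' = l2[unfolded maximal_chain_def]
  have take_eq: "take (Suc i) l1 = take (Suc j) l2"
  proof (rule chain_eq_by_last[OF left_unique])
    show "successively P (take (Suc i) l1)" "successively P (take (Suc j) l2)"
      using take_drop l1' l2' by blast+
    show "\<nexists>a. P a (hd (take (Suc i) l1))" "\<nexists>a. P a (hd (take (Suc j) l2))"
      using l1' l2' by simp_all
    show "last (take (Suc i) l1) = last (take (Suc j) l2)"
      using i j nth_eq by (simp add: take_Suc_conv_app_nth)
  qed (use l1' l2' in simp_all)
  have "i = j"
    using arg_cong[OF take_eq, of length] i j by simp
  moreover have "take i l1 = take i l2"
    using arg_cong[OF take_eq, of "take i"] \<open>i = j\<close> by simp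
  moreover have "drop i l1 = drop j l2"
  proof (rule chain_eq_by_hd[OF right_unique])
    show "successively P (drop i l1)" "successively P (drop j l2)"
      using take_drop l1' l2' by blast+
    show "\<nexists>b. P (last (drop i l1)) b" "\<nexists>b. P (last (drop j l2)) b"
      using l1' l2' i j by simp_all
    show "hd (drop i l1) = hd (drop j l2)"
      using i j nth_eq by (simp add: hd_drop_conv_nth)
  qed (use i j in simp_all)
  ultimately have "take i l1 @ drop i l1 = take j l2 @ drop j l2"
    by simp
  then show ?thesis
    using \<open>i = j\<close> by simp
qed

fun path_arrows :: "('v, 'a) qpath \<Rightarrow> 'a list" where
  "path_arrows (Path l) = l"
| "path_arrows (TrivP x e) = []"
| "path_arrows (TrivA x e) = []"

locale signed_quiver =
  fixes V :: "'v set" and A :: "'a set" and s t :: "'a \<Rightarrow> 'v"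
    and R :: "('a \<times> 'a) set" and \<sigma> \<tau> :: "'a \<Rightarrow> int"
  assumes finite_V: "finite V" and finite_A: "finite A"
    and arrow_ends: "a \<in> A \<Longrightarrow> s a \<in> V \<and> t a \<in> V"
    and signs: "sign_fns A s t R \<sigma> \<tau>"
begin

lemma sigma_sign: "a \<in> A \<Longrightarrow> \<sigma> a \<in> {1, -1}"
  and tau_sign: "a \<in> A \<Longrightarrow> \<tau> a \<in> {1, -1}"
  using signs unfolding sign_fns_def by auto

lemma source_sigma_unique: "a \<in> A \<Longrightarrow> b \<in> A \<Longrightarrow> s a = s b \<Longrightarrow> \<sigma> a = \<sigma> b \<Longrightarrow> a = b"
proof (rule ccontr)
  assume "a \<in> A" "b \<in> A" "s a = s b" "\<sigma> a = \<sigma> b" "a \<noteq> b"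
  then have "\<sigma> a = - \<sigma> b" using signs unfolding sign_fns_def by blast
  with \<open>\<sigma> a = \<sigma> b\<close> sigma_sign[OF \<open>a \<in> A\<close>] show False by auto
qed

lemma target_tau_unique: "a \<in> A \<Longrightarrow> b \<in> A \<Longrightarrow> t a = t b \<Longrightarrow> \<tau> a = \<tau> b \<Longrightarrow> a = b"
proof (rule ccontr)
  assume "a \<in> A" "b \<in> A" "t a = t b" "\<tau> a = \<tau> b" "a \<noteq> b"
  then have "\<tau> a = - \<tau> b" using signs unfolding sign_fns_def by blast
  with \<open>\<tau> a = \<tau> b\<close> tau_sign[OF \<open>a \<in> A\<close>] show False by auto
qed

text \<open>For \<open>s a = t b\<close>, the condition \<open>\<tau> b = c * \<sigma> a\<close> means \<open>(a, b) \<in> R\<close> when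
  \<open>c = 1\<close> (antipaths) and \<open>(a, b) \<notin> R\<close> when \<open>c = -1\<close> (permitted paths).\<close>

definition chain_step :: "int \<Rightarrow> 'a \<Rightarrow> 'a \<Rightarrow> bool" where
  "chain_step c a b \<longleftrightarrow> a \<in> A \<and> b \<in> A \<and> t b = s a \<and> \<tau> b = c * \<sigma> a"

lemma chain_step_iff:
  assumes "a \<in> A" "b \<in> A" "c \<in> {1, -1}"
  shows "chain_step c a b \<longleftrightarrow> s a = t b \<and> ((a, b) \<in> R \<longleftrightarrow> c = 1)"
proof -
  have "s a = t b \<Longrightarrow> (a, b) \<in> R \<longleftrightarrow> \<sigma> a = \<tau> b"
    using signs assms(1,2) unfolding sign_fns_def by blast
  then show ?thesis
    using assms sigma_sign[OF assms(1)] tau_sign[OF assms(2)] unfolding chain_step_def by auto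
qed

lemma chain_step_arrows: "chain_step c a b \<Longrightarrow> a \<in> A" "chain_step c a b \<Longrightarrow> b \<in> A"
  unfolding chain_step_def by simp_all

lemma chain_step_right_unique: "chain_step c a b \<Longrightarrow> chain_step c a b' \<Longrightarrow> b = b'"
  unfolding chain_step_def using target_tau_unique by metis

lemma chain_step_left_unique: "c \<noteq> 0 \<Longrightarrow> chain_step c a b \<Longrightarrow> chain_step c a' b \<Longrightarrow> a = a'"
  unfolding chain_step_def using source_sigma_unique by auto

lemma chain_iff_path:
  assumes "c \<in> {1, -1}"
  shows "l \<noteq> [] \<and> set l \<subseteq> A \<and> successively (chain_step c) l \<longleftrightarrow>
    is_path A s t l \<and> (\<forall>i. Suc i < length l \<longrightarrow> ((l ! i, l ! Suc i) \<in> R \<longleftrightarrow> c = 1))"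
proof -
  have "chain_step c (l ! i) (l ! Suc i) \<longleftrightarrow>
      s (l ! i) = t (l ! Suc i) \<and> ((l ! i, l ! Suc i) \<in> R \<longleftrightarrow> c = 1)"
    if "set l \<subseteq> A" "Suc i < length l" for i
  proof -
    have "l ! i \<in> A" "l ! Suc i \<in> A"
      using that nth_mem[of i l] nth_mem[of "Suc i" l] by auto
    then show ?thesis using chain_step_iff[OF _ _ assms] by blast
  qed
  then show ?thesis
    unfolding is_path_def successively_conv_nth by auto
qed

lemma has_predecessor_iff:
  "b \<in> A \<Longrightarrow> c \<in> {1, -1} \<Longrightarrow> (\<exists>a. chain_step c a b) \<longleftrightarrow> (\<exists>a\<in>A. s a = t b \<and> \<sigma> a = c * \<tau> b)"
  unfolding chain_step_def by auto

lemma has_successor_iff: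
  "a \<in> A \<Longrightarrow> (\<exists>b. chain_step c a b) \<longleftrightarrow> (\<exists>b\<in>A. t b = s a \<and> \<tau> b = c * \<sigma> a)"
  unfolding chain_step_def by auto

end

text \<open>With \<open>c = 1\<close> and \<open>TrivA\<close>, \<open>maximal\<close> below is the set \<open>\<N>\<close> of maximal antipaths;
  with \<open>c = -1\<close> and \<open>TrivP\<close> it is the set \<open>\<M>\<close> of maximal permitted paths.\<close>

locale path_kind = signed_quiver V A s t R \<sigma> \<tau>
  for V :: "'v set" and A :: "'a set" and s t :: "'a \<Rightarrow> 'v"
    and R :: "('a \<times> 'a) set" and \<sigma> \<tau> :: "'a \<Rightarrow> int" +
  fixes c :: int and T :: "'v \<Rightarrow> int \<Rightarrow> ('v, 'a) qpath"
  assumes kind: "(c = 1 \<and> T = TrivA) \<or> (c = -1 \<and> T = TrivP)"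
begin

lemma c_sign: "c \<in> {1, -1}"
  using kind by auto

lemma trivial_path_simps [simp]:
  "psrc s (T x e) = x" "ptgt t (T x e) = x" "psig \<sigma> (T x e) = e" "ptau \<tau> (T x e) = c * e"
  "T x e \<noteq> Path l" "Path l \<noteq> T x e" "T x e = T x' e' \<longleftrightarrow> x = x' \<and> e = e'"
  using kind by auto

lemma step_left_unique: "chain_step c a b \<Longrightarrow> chain_step c a' b \<Longrightarrow> a = a'"
  by (rule chain_step_left_unique) (use c_sign in auto)

definition maximal :: "('v, 'a) qpath set" where
  "maximal =
     {T x e | x e. x \<in> V \<and> e \<in> {1, -1} \<and> \<not> (\<exists>a\<in>A. s a = x \<and> \<sigma> a = e)
        \<and> \<not> (\<exists>b\<in>A. t b = x \<and> \<tau> b = c * e)} \<union>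
     {Path l | l. set l \<subseteq> A \<and> maximal_chain (chain_step c) l}"

lemma Path_in_maximal_iff [simp]:
  "Path l \<in> maximal \<longleftrightarrow> set l \<subseteq> A \<and> maximal_chain (chain_step c) l"
  unfolding maximal_def using kind by auto

lemma trivial_path_in_maximal_iff [simp]:
  "T x e \<in> maximal \<longleftrightarrow> x \<in> V \<and> e \<in> {1, -1} \<and> \<not> (\<exists>a\<in>A. s a = x \<and> \<sigma> a = e)
     \<and> \<not> (\<exists>b\<in>A. t b = x \<and> \<tau> b = c * e)"
  unfolding maximal_def by auto

lemma Path_in_maximal_arrows:
  assumes "Path l \<in> maximal"
  shows "l \<noteq> []" "hd l \<in> A" "last l \<in> A"
  using assms by (auto simp: maximal_chain_def)

lemma maximalE:
  assumes "w \<in> maximal"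
  obtains x e where "w = T x e" "x \<in> V" "e \<in> {1, -1}" "\<not> (\<exists>a\<in>A. s a = x \<and> \<sigma> a = e)"
    "\<not> (\<exists>b\<in>A. t b = x \<and> \<tau> b = c * e)"
  | l where "w = Path l" "set l \<subseteq> A" "maximal_chain (chain_step c) l" "hd l \<in> A" "last l \<in> A"
  using assms Path_in_maximal_arrows unfolding maximal_def by blast

lemma maximal_iff:
  "w \<in> maximal \<longleftrightarrow>
     ((\<exists>x e. w = T x e \<and> x \<in> V \<and> e \<in> {1, -1}) \<or>
      (\<exists>l. w = Path l \<and> is_path A s t l \<and> (\<forall>i. Suc i < length l \<longrightarrow> ((l ! i, l ! Suc i) \<in> R \<longleftrightarrow> c = 1))))
     \<and> \<not> (\<exists>a\<in>A. s a = ptgt t w \<and> \<sigma> a = c * ptau \<tau> w)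
     \<and> \<not> (\<exists>b\<in>A. t b = psrc s w \<and> \<tau> b = c * psig \<sigma> w)"
proof (cases "\<exists>l. w = Path l")
  case True
  then obtain l where w: "w = Path l" ..
  show ?thesis
  proof (cases "l \<noteq> [] \<and> set l \<subseteq> A")
    case True
    then have "hd l \<in> A" "last l \<in> A" by auto
    have "Path l \<in> maximal \<longleftrightarrow> (l \<noteq> [] \<and> set l \<subseteq> A \<and> successively (chain_step c) l)
        \<and> \<not> (\<exists>a. chain_step c a (hd l)) \<and> \<not> (\<exists>b. chain_step c (last l) b)"
      by (auto simp: maximal_chain_def)
    then show ?thesis
      unfolding w chain_iff_path[OF c_sign] has_predecessor_iff[OF \<open>hd l \<in> A\<close> c_sign]
        has_successor_iff[OF \<open>last l \<in> A\<close>]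
      by auto
  next
    case False
    then show ?thesis
      unfolding w by (auto simp: maximal_chain_def is_path_def)
  qed
next
  case not_Path: False
  show ?thesis
  proof (cases "\<exists>x e. w = T x e")
    case True
    then obtain x e where w: "w = T x e" by blast
    have "c * (c * e) = e"
      using c_sign by auto
    then show ?thesis
      unfolding w by auto
  next
    case False
    then have "w \<notin> maximal"
      using not_Path by (auto elim: maximalE)
    then show ?thesis
      using False not_Path by auto
  qed
qed

lemma maximal_ends:
  assumes "w \<in> maximal"
  shows "psrc s w \<in> V \<and> psig \<sigma> w \<in> {1, -1} \<and> ptgt t w \<in> V \<and> ptau \<tau> w \<in> {1, -1}"
  using assms
proof (cases rule: maximalE)
  case (1 x e)
  then show ?thesis
    using c_sign by auto
next
  case (2 l)
  then show ?thesis
    using arrow_ends sigma_sign tau_sign by auto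
qed

lemma maximal_trivial_iff_source:
  assumes "w \<in> maximal"
  shows "(\<exists>x e. w = T x e) \<longleftrightarrow> \<not> (\<exists>a\<in>A. s a = psrc s w \<and> \<sigma> a = psig \<sigma> w)"
  using assms by (cases rule: maximalE) auto

lemma maximal_trivial_iff_target:
  assumes "w \<in> maximal"
  shows "(\<exists>x e. w = T x e) \<longleftrightarrow> \<not> (\<exists>b\<in>A. t b = ptgt t w \<and> \<tau> b = ptau \<tau> w)"
  using assms by (cases rule: maximalE) auto

lemma maximal_PathE:
  assumes "w \<in> maximal" "\<nexists>x e. w = T x e"
  obtains l where "w = Path l" "Path l \<in> maximal"
  using assms by (auto elim: maximalE)

lemma inj_on_maximal_sources: "inj_on (\<lambda>w. (psrc s w, psig \<sigma> w)) maximal"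
proof (rule inj_onI)
  fix w1 w2 assume w1: "w1 \<in> maximal" and w2: "w2 \<in> maximal"
    and "(psrc s w1, psig \<sigma> w1) = (psrc s w2, psig \<sigma> w2)"
  then have eq: "psrc s w1 = psrc s w2" "psig \<sigma> w1 = psig \<sigma> w2" by simp_all
  show "w1 = w2"
  proof (cases "\<exists>x e. w1 = T x e")
    case True
    moreover have "\<exists>x e. w2 = T x e"
      using True maximal_trivial_iff_source[OF w1] maximal_trivial_iff_source[OF w2] eq by simp
    ultimately show ?thesis
      using eq by auto
  next
    case False
    moreover have "\<nexists>x e. w2 = T x e"
      using False maximal_trivial_iff_source[OF w1] maximal_trivial_iff_source[OF w2] eq by simp
    ultimately obtain l1 l2 where l1: "w1 = Path l1" "Path l1 \<in> maximal"
      and l2: "w2 = Path l2" "Path l2 \<in> maximal"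
      using maximal_PathE[OF w1] maximal_PathE[OF w2] by metis
    then have "last l1 = last l2"
      using eq source_sigma_unique Path_in_maximal_arrows(3) by simp
    then show "w1 = w2"
      using l1 l2 chain_eq_by_last[of "chain_step c", OF step_left_unique] by (simp add: maximal_chain_def)
  qed
qed

lemma inj_on_maximal_targets: "inj_on (\<lambda>w. (ptgt t w, ptau \<tau> w)) maximal"
proof (rule inj_onI)
  fix w1 w2 assume w1: "w1 \<in> maximal" and w2: "w2 \<in> maximal"
    and "(ptgt t w1, ptau \<tau> w1) = (ptgt t w2, ptau \<tau> w2)"
  then have eq: "ptgt t w1 = ptgt t w2" "ptau \<tau> w1 = ptau \<tau> w2" by simp_all
  show "w1 = w2"
  proof (cases "\<exists>x e. w1 = T x e")
    case True
    moreover have "\<exists>x e. w2 = T x e"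
      using True maximal_trivial_iff_target[OF w1] maximal_trivial_iff_target[OF w2] eq by simp
    ultimately show ?thesis
      using eq c_sign by auto
  next
    case False
    moreover have "\<nexists>x e. w2 = T x e"
      using False maximal_trivial_iff_target[OF w1] maximal_trivial_iff_target[OF w2] eq by simp
    ultimately obtain l1 l2 where l1: "w1 = Path l1" "Path l1 \<in> maximal"
      and l2: "w2 = Path l2" "Path l2 \<in> maximal"
      using maximal_PathE[OF w1] maximal_PathE[OF w2] by metis
    then have "hd l1 = hd l2"
      using eq target_tau_unique Path_in_maximal_arrows(2) by simp
    then show "w1 = w2"
      using l1 l2 chain_eq_by_hd[of "chain_step c", OF chain_step_right_unique]
      by (simp add: maximal_chain_def)
  qed
qed

lemma maximal_with_source:
  assumes "x \<in> V" "e \<in> {1, -1}" "\<not> (\<exists>b\<in>A. t b = x \<and> \<tau> b = c * e)"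
  obtains w where "w \<in> maximal" "psrc s w = x" "psig \<sigma> w = e"
proof (cases "\<exists>a\<in>A. s a = x \<and> \<sigma> a = e")
  case True
  then obtain a where a: "a \<in> A" "s a = x" "\<sigma> a = e" by blast
  have no_successor: "\<nexists>b. chain_step c a b"
    using a assms(3) has_successor_iff by auto
  obtain l where "set l \<subseteq> A" "maximal_chain (chain_step c) l" "last l = a"
    by (rule maximal_chain_ending_at[of A "chain_step c" a])
      (use finite_A a(1) no_successor in \<open>auto intro: chain_step_right_unique chain_step_arrows\<close>)
  then show ?thesis
    using that[of "Path l"] a by simp
next
  case False
  then show ?thesis
    using that[of "T x e"] assms by simp
qed

lemma maximal_with_target:
  assumes "x \<in> V" "e \<in> {1, -1}" "\<not> (\<exists>a\<in>A. s a = x \<and> \<sigma> a = c * e)"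
  obtains w where "w \<in> maximal" "ptgt t w = x" "ptau \<tau> w = e"
proof (cases "\<exists>b\<in>A. t b = x \<and> \<tau> b = e")
  case True
  then obtain b where b: "b \<in> A" "t b = x" "\<tau> b = e" by blast
  have no_predecessor: "\<nexists>a. chain_step c a b"
  proof
    assume "\<exists>a. chain_step c a b"
    then obtain a where "a \<in> A" "s a = x" "e = c * \<sigma> a"
      using b unfolding chain_step_def by auto
    moreover from this(3) have "\<sigma> a = c * e"
      using c_sign by auto
    ultimately show False
      using assms(3) by blast
  qed
  obtain l where "set l \<subseteq> A" "maximal_chain (chain_step c) l" "hd l = b"
    by (rule maximal_chain_starting_at[of A "chain_step c" b])
      (use finite_A b(1) no_predecessor in \<open>auto intro: step_left_unique chain_step_arrows\<close>)
  then show ?thesis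
    using that[of "Path l"] b by simp
next
  case False
  then show ?thesis
    using that[of "T x (c * e)"] assms c_sign by auto
qed

lemma bij_betw_maximal_sources:
  "bij_betw (\<lambda>w. (psrc s w, psig \<sigma> w)) maximal
     {(x, e). x \<in> V \<and> e \<in> {1, -1} \<and> \<not> (\<exists>b\<in>A. t b = x \<and> \<tau> b = c * e)}"
  unfolding bij_betw_def
proof (intro conjI inj_on_maximal_sources subset_antisym subsetI)
  fix p assume "p \<in> (\<lambda>w. (psrc s w, psig \<sigma> w)) ` maximal"
  then obtain w where w: "w \<in> maximal" "p = (psrc s w, psig \<sigma> w)"
    by blast
  then show "p \<in> {(x, e). x \<in> V \<and> e \<in> {1, -1} \<and> \<not> (\<exists>b\<in>A. t b = x \<and> \<tau> b = c * e)}"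
    using maximal_ends[OF w(1)] maximal_iff[THEN iffD1, OF w(1)] w(2) by auto
next
  fix p assume "p \<in> {(x, e). x \<in> V \<and> e \<in> {1, -1} \<and> \<not> (\<exists>b\<in>A. t b = x \<and> \<tau> b = c * e)}"
  then obtain x e where "p = (x, e)" "x \<in> V" "e \<in> {1, -1}" "\<not> (\<exists>b\<in>A. t b = x \<and> \<tau> b = c * e)"
    by blast
  moreover from this(2-4) obtain w where "w \<in> maximal" "psrc s w = x" "psig \<sigma> w = e"
    by (rule maximal_with_source)
  ultimately show "p \<in> (\<lambda>w. (psrc s w, psig \<sigma> w)) ` maximal"
    by force
qed

lemma bij_betw_maximal_targets:
  "bij_betw (\<lambda>w. (ptgt t w, ptau \<tau> w)) maximal
     {(x, e). x \<in> V \<and> e \<in> {1, -1} \<and> \<not> (\<exists>a\<in>A. s a = x \<and> \<sigma> a = c * e)}"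
  unfolding bij_betw_def
proof (intro conjI inj_on_maximal_targets subset_antisym subsetI)
  fix p assume "p \<in> (\<lambda>w. (ptgt t w, ptau \<tau> w)) ` maximal"
  then obtain w where w: "w \<in> maximal" "p = (ptgt t w, ptau \<tau> w)"
    by blast
  then show "p \<in> {(x, e). x \<in> V \<and> e \<in> {1, -1} \<and> \<not> (\<exists>a\<in>A. s a = x \<and> \<sigma> a = c * e)}"
    using maximal_ends[OF w(1)] maximal_iff[THEN iffD1, OF w(1)] w(2) by auto
next
  fix p assume "p \<in> {(x, e). x \<in> V \<and> e \<in> {1, -1} \<and> \<not> (\<exists>a\<in>A. s a = x \<and> \<sigma> a = c * e)}"
  then obtain x e where "p = (x, e)" "x \<in> V" "e \<in> {1, -1}" "\<not> (\<exists>a\<in>A. s a = x \<and> \<sigma> a = c * e)"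
    by blast
  moreover from this(2-4) obtain w where "w \<in> maximal" "ptgt t w = x" "ptau \<tau> w = e"
    by (rule maximal_with_target)
  ultimately show "p \<in> (\<lambda>w. (ptgt t w, ptau \<tau> w)) ` maximal"
    by force
qed

lemma finite_maximal: "finite maximal"
proof -
  have "finite {(x, e). x \<in> V \<and> e \<in> {1, -1::int} \<and> \<not> (\<exists>b\<in>A. t b = x \<and> \<tau> b = c * e)}"
    by (rule finite_subset[of _ "V \<times> {1, -1}"]) (auto simp: finite_V)
  then show ?thesis
    using bij_betw_finite[OF bij_betw_maximal_sources] by simp
qed

lemma maximal_position:
  assumes "(w, i) \<in> Sigma maximal (\<lambda>w. {..<plen w})"
  obtains l where "w = Path l" "Path l \<in> maximal" "i < length l"
  using assms kind by (cases w) auto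

end

sublocale signed_quiver \<subseteq> anti: path_kind V A s t R \<sigma> \<tau> 1 TrivA
  by unfold_locales simp

sublocale signed_quiver \<subseteq> perm: path_kind V A s t R \<sigma> \<tau> "-1" TrivP
  by unfold_locales simp

context signed_quiver
begin

lemma maxAnti_eq: "maxAnti V A s t R \<sigma> \<tau> = anti.maximal"
proof (rule set_eqI)
  fix w
  show "w \<in> maxAnti V A s t R \<sigma> \<tau> \<longleftrightarrow> w \<in> anti.maximal"
    unfolding anti.maximal_iff maxAnti_def antipaths_def by auto
qed

lemma maxPerm_eq: "maxPerm V A s t R \<sigma> \<tau> = perm.maximal"
proof (rule set_eqI)
  fix w
  show "w \<in> maxPerm V A s t R \<sigma> \<tau> \<longleftrightarrow> w \<in> perm.maximal"
    unfolding perm.maximal_iff maxPerm_def permitted_def by auto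
qed

text \<open>\<open>\<psi>\<close> matches the source slot \<open>(x, e)\<close> of a maximal antipath with the slot \<open>(x, -e)\<close>
  of a maximal permitted path, and \<open>\<phi>\<close> does the same with target slots; the source and
  target maps of both kinds of maximal paths are bijections onto the free slots.\<close>

lemma bij_betw_psiN: "bij_betw (psiN V A s t R \<sigma> \<tau>) anti.maximal perm.maximal"
proof -
  have "bij_betw ((\<lambda>(x, e). (x, - e)) \<circ> (\<lambda>w. (psrc s w, psig \<sigma> w))) anti.maximal
      {(x, e). x \<in> V \<and> e \<in> {1, -1} \<and> \<not> (\<exists>b\<in>A. t b = x \<and> \<tau> b = -1 * e)}"
    using bij_betw_trans[OF anti.bij_betw_maximal_sources
        bij_betw_flip_sign[where P = "\<lambda>x e. \<not> (\<exists>b\<in>A. t b = x \<and> \<tau> b = e)" and c = 1]] by simp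
  from bij_betw_THE[OF this perm.bij_betw_maximal_sources]
  show ?thesis
    by (rule bij_betw_cong[THEN iffD1, rotated]) (auto simp: psiN_def maxPerm_eq)
qed

lemma bij_betw_phiM: "bij_betw (phiM V A s t R \<sigma> \<tau>) perm.maximal anti.maximal"
proof -
  have "bij_betw ((\<lambda>(x, e). (x, - e)) \<circ> (\<lambda>w. (ptgt t w, ptau \<tau> w))) perm.maximal
      {(x, e). x \<in> V \<and> e \<in> {1, -1} \<and> \<not> (\<exists>a\<in>A. s a = x \<and> \<sigma> a = 1 * e)}"
    using bij_betw_trans[OF perm.bij_betw_maximal_targets
        bij_betw_flip_sign[where P = "\<lambda>x e. \<not> (\<exists>a\<in>A. s a = x \<and> \<sigma> a = e)" and c = "-1"]] by simp
  from bij_betw_THE[OF this anti.bij_betw_maximal_targets]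
  show ?thesis
    by (rule bij_betw_cong[THEN iffD1, rotated]) (auto simp: phiM_def maxAnti_eq)
qed

lemma bij_betw_PhiN: "bij_betw (PhiN V A s t R \<sigma> \<tau>) anti.maximal anti.maximal"
  unfolding PhiN_def using bij_betw_trans[OF bij_betw_psiN bij_betw_phiM] .

lemma arrowsC_eq: "arrowsC V A s t R \<sigma> \<tau> = {a \<in> A. \<nexists>l. Path l \<in> anti.maximal \<and> a \<in> set l}"
  unfolding arrowsC_def is_subpath_def maxAnti_eq by (auto simp: in_set_conv_decomp)

lemma arrowsC_successor_exists:
  assumes "a \<in> arrowsC V A s t R \<sigma> \<tau>"
  obtains b where "chain_step 1 a b"
proof -
  have a: "a \<in> A" "\<nexists>l. Path l \<in> anti.maximal \<and> a \<in> set l"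
    using assms arrowsC_eq by auto
  have "\<exists>b. chain_step 1 a b"
  proof (rule ccontr)
    assume no_successor: "\<nexists>b. chain_step 1 a b"
    obtain l where "set l \<subseteq> A" "maximal_chain (chain_step 1) l" "last l = a"
      by (rule maximal_chain_ending_at[of A "chain_step 1" a])
        (use finite_A a(1) no_successor in \<open>auto intro: chain_step_right_unique chain_step_arrows\<close>)
    then have "Path l \<in> anti.maximal" "a \<in> set l"
      by (auto simp: maximal_chain_def)
    then show False
      using a(2) by blast
  qed
  then show ?thesis
    using that by blast
qed

lemma arrowsC_successor:
  assumes a: "a \<in> arrowsC V A s t R \<sigma> \<tau>" and b: "chain_step 1 a b"
  shows "b \<in> arrowsC V A s t R \<sigma> \<tau>"
proof -
  have "b \<notin> set l" if l: "Path l \<in> anti.maximal" for l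
  proof
    assume "b \<in> set l"
    then obtain k where k: "k < length l" "l ! k = b" by (auto simp: in_set_conv_nth)
    have chain: "successively (chain_step 1) l" "\<nexists>a. chain_step 1 a (hd l)"
      using l by (simp_all add: maximal_chain_def)
    show False
    proof (cases k)
      case 0
      then show False
        using b chain(2) k anti.Path_in_maximal_arrows(1)[OF l] by (simp add: hd_conv_nth)
    next
      case (Suc j)
      then have "chain_step 1 (l ! j) b"
        using successively_nth[OF chain(1), of j] k by simp
      then have "l ! j = a"
        using anti.step_left_unique b by blast
      then show False
        using a l Suc k(1) nth_mem[of j l] arrowsC_eq by auto
    qed
  qed
  then show ?thesis
    using b chain_step_arrows(2) arrowsC_eq by auto
qed

lemma PsiC_step:
  assumes a: "a \<in> arrowsC V A s t R \<sigma> \<tau>"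
  shows "PsiC V A s t R \<sigma> \<tau> a \<in> arrowsC V A s t R \<sigma> \<tau> \<and> chain_step 1 a (PsiC V A s t R \<sigma> \<tau> a)"
proof -
  obtain b where b: "chain_step 1 a b"
    using arrowsC_successor_exists[OF a] .
  have "PsiC V A s t R \<sigma> \<tau> a = b"
    unfolding PsiC_def
  proof (rule the_equality)
    show "b \<in> arrowsC V A s t R \<sigma> \<tau> \<and> t b = s a \<and> \<tau> b = \<sigma> a"
      using arrowsC_successor[OF a b] b by (simp add: chain_step_def)
    show "b' = b" if "b' \<in> arrowsC V A s t R \<sigma> \<tau> \<and> t b' = s a \<and> \<tau> b' = \<sigma> a" for b'
      using that b target_tau_unique arrowsC_eq by (auto simp: chain_step_def)
  qed
  then show ?thesis
    using arrowsC_successor[OF a b] b by simp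
qed

lemma PsiC_maps: "PsiC V A s t R \<sigma> \<tau> ` arrowsC V A s t R \<sigma> \<tau> \<subseteq> arrowsC V A s t R \<sigma> \<tau>"
  using PsiC_step by auto

lemma inj_on_PsiC: "inj_on (PsiC V A s t R \<sigma> \<tau>) (arrowsC V A s t R \<sigma> \<tau>)"
proof (rule inj_onI)
  fix a1 a2 assume a1: "a1 \<in> arrowsC V A s t R \<sigma> \<tau>" and a2: "a2 \<in> arrowsC V A s t R \<sigma> \<tau>"
    and eq: "PsiC V A s t R \<sigma> \<tau> a1 = PsiC V A s t R \<sigma> \<tau> a2"
  have "chain_step 1 a1 (PsiC V A s t R \<sigma> \<tau> a1)" "chain_step 1 a2 (PsiC V A s t R \<sigma> \<tau> a1)"
    using PsiC_step[OF a1] PsiC_step[OF a2] eq by simp_all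
  then show "a1 = a2"
    by (rule anti.step_left_unique)
qed

lemma finite_arrowsC: "finite (arrowsC V A s t R \<sigma> \<tau>)"
  using finite_A arrowsC_eq by simp

lemma card_maximal_antipaths: "card anti.maximal + card A = 2 * card V"
proof -
  define free where "free = {(x, e). x \<in> V \<and> e \<in> {1, -1::int} \<and> \<not> (\<exists>b\<in>A. t b = x \<and> \<tau> b = 1 * e)}"
  define occupied where "occupied = (\<lambda>b. (t b, \<tau> b)) ` A"
  have "card anti.maximal = card free"
    unfolding free_def by (rule bij_betw_same_card[OF anti.bij_betw_maximal_sources])
  moreover have "card occupied = card A"
    unfolding occupied_def by (rule card_image) (auto intro: inj_onI target_tau_unique)
  moreover have "free \<union> occupied = V \<times> {1, -1}"
    using arrow_ends tau_sign by (auto simp: free_def occupied_def)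
  moreover have "free \<inter> occupied = {}"
    by (auto simp: free_def occupied_def)
  moreover have "finite free" "finite occupied"
    using finite_V finite_A by (auto simp: free_def occupied_def intro: finite_subset[of _ "V \<times> {1, -1}"])
  ultimately show ?thesis
    using card_Un_disjoint[of free occupied] by (simp add: card_cartesian_product)
qed

lemma inj_on_arrow_positions:
  "inj_on (\<lambda>(w, i). path_arrows w ! i) (Sigma anti.maximal (\<lambda>w. {..<plen w}))"
proof (rule inj_onI)
  fix p q assume p_pos: "p \<in> Sigma anti.maximal (\<lambda>w. {..<plen w})"
    and q_pos: "q \<in> Sigma anti.maximal (\<lambda>w. {..<plen w})"
    and eq: "(\<lambda>(w, i). path_arrows w ! i) p = (\<lambda>(w, i). path_arrows w ! i) q"
  obtain w1 i w2 j where "p = (w1, i)" "q = (w2, j)"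
    by fastforce
  with p_pos q_pos obtain l1 l2
    where p: "p = (Path l1, i)" "Path l1 \<in> anti.maximal" "i < length l1"
      and q: "q = (Path l2, j)" "Path l2 \<in> anti.maximal" "j < length l2"
    by (metis anti.maximal_position)
  have "i = j \<and> l1 = l2"
    by (rule maximal_chain_nth_eq[OF anti.step_left_unique chain_step_right_unique])
      (use p q eq in auto)
  then show "p = q"
    using p q by simp
qed

lemma image_arrow_positions:
  "(\<lambda>(w, i). path_arrows w ! i) ` Sigma anti.maximal (\<lambda>w. {..<plen w}) = A - arrowsC V A s t R \<sigma> \<tau>"
proof (intro subset_antisym subsetI)
  fix a assume "a \<in> (\<lambda>(w, i). path_arrows w ! i) ` Sigma anti.maximal (\<lambda>w. {..<plen w})"
  then obtain w i where "(w, i) \<in> Sigma anti.maximal (\<lambda>w. {..<plen w})" "a = path_arrows w ! i"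
    by auto
  then obtain l where "Path l \<in> anti.maximal" "i < length l" "a = l ! i"
    by (metis anti.maximal_position path_arrows.simps(1))
  then show "a \<in> A - arrowsC V A s t R \<sigma> \<tau>"
    unfolding arrowsC_eq by (auto simp: maximal_chain_def)
next
  fix a assume "a \<in> A - arrowsC V A s t R \<sigma> \<tau>"
  then obtain l where l: "Path l \<in> anti.maximal" "a \<in> set l"
    unfolding arrowsC_eq by auto
  then obtain i where "i < length l" "a = l ! i"
    by (auto simp: in_set_conv_nth)
  then show "a \<in> (\<lambda>(w, i). path_arrows w ! i) ` Sigma anti.maximal (\<lambda>w. {..<plen w})"
    using l by (intro image_eqI[of _ _ "(Path l, i)"]) auto
qed

lemma sum_plen_maximal_antipaths:
  "(\<Sum>w\<in>anti.maximal. plen w) + card (arrowsC V A s t R \<sigma> \<tau>) = card A"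
proof -
  have C_subset: "arrowsC V A s t R \<sigma> \<tau> \<subseteq> A"
    unfolding arrowsC_eq by auto
  have "(\<Sum>w\<in>anti.maximal. plen w) = card (Sigma anti.maximal (\<lambda>w. {..<plen w}))"
    using anti.finite_maximal by simp
  also have "\<dots> = card (A - arrowsC V A s t R \<sigma> \<tau>)"
    using card_image[OF inj_on_arrow_positions] image_arrow_positions by simp
  also have "\<dots> = card A - card (arrowsC V A s t R \<sigma> \<tau>)"
    using card_Diff_subset[OF finite_subset[OF C_subset finite_A] C_subset] .
  finally show ?thesis
    using card_mono[OF finite_A C_subset] by simp
qed

end

theorem lemma3p2:
  fixes V :: "'v set" and A :: "'a set" and s t :: "'a \<Rightarrow> 'v"
    and R :: "('a \<times> 'a) set" and \<sigma> \<tau> :: "'a \<Rightarrow> int"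
  assumes "gentle V A s t R" and "sign_fns A s t R \<sigma> \<tau>"
  shows "((\<Sum>Ob\<in>orbits (PhiN V A s t R \<sigma> \<tau>) (maxAnti V A s t R \<sigma> \<tau>). int (card Ob))
           + (\<Sum>Ob\<in>orbits (PsiC V A s t R \<sigma> \<tau>) (arrowsC V A s t R \<sigma> \<tau>). (0::int))
         = 2 * int (card V) - int (card A)) \<and>
         ((\<Sum>Ob\<in>orbits (PhiN V A s t R \<sigma> \<tau>) (maxAnti V A s t R \<sigma> \<tau>). (\<Sum>w\<in>Ob. plen w))
           + (\<Sum>Ob\<in>orbits (PsiC V A s t R \<sigma> \<tau>) (arrowsC V A s t R \<sigma> \<tau>). card Ob)
         = card A)"
proof -
  interpret signed_quiver V A s t R \<sigma> \<tau>
    using assms by unfold_locales (auto simp: gentle_def)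
  let ?N = "maxAnti V A s t R \<sigma> \<tau>" and ?C = "arrowsC V A s t R \<sigma> \<tau>"
  have sum_N: "(\<Sum>Ob\<in>orbits (PhiN V A s t R \<sigma> \<tau>) ?N. sum h Ob) = sum h ?N" for h :: "_ \<Rightarrow> 'b::comm_monoid_add"
    using sum_orbits[OF _ bij_betw_imp_surj_on[OF bij_betw_PhiN, THEN equalityD1]
        bij_betw_imp_inj_on[OF bij_betw_PhiN]] anti.finite_maximal maxAnti_eq by simp
  have sum_C: "(\<Sum>Ob\<in>orbits (PsiC V A s t R \<sigma> \<tau>) ?C. sum h Ob) = sum h ?C" for h :: "_ \<Rightarrow> 'b::comm_monoid_add"
    using sum_orbits[OF finite_arrowsC PsiC_maps inj_on_PsiC] .
  have "(\<Sum>Ob\<in>orbits (PhiN V A s t R \<sigma> \<tau>) ?N. int (card Ob)) = int (card ?N)"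
    using sum_N[of "\<lambda>_. 1::int"] by simp
  then have "(\<Sum>Ob\<in>orbits (PhiN V A s t R \<sigma> \<tau>) ?N. int (card Ob)) = 2 * int (card V) - int (card A)"
    using card_maximal_antipaths maxAnti_eq by simp
  moreover have "(\<Sum>Ob\<in>orbits (PsiC V A s t R \<sigma> \<tau>) ?C. card Ob) = card ?C"
    using sum_C[of "\<lambda>_. 1::nat"] by simp
  ultimately show ?thesis
    using sum_N[of plen] sum_plen_maximal_antipaths maxAnti_eq by simp
qed

end
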